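(* Let $x\in\beta\mathbb{N}$ with $x\in\overline{L_i}$ for some $i\ge1$. Then $x$ is irreducible in $\beta\mathbb{N}$ or $x$ is a product of irreducible elements of $\beta\mathbb{N}$.
   Context: $\mathbb{N}=\{1,2,3,\dots\}$; $\beta\mathbb{N}$ is the set of ultrafilters on $\mathbb{N}$ (Stone–Čech compactification of discrete $\mathbb{N}$, naturals identified with principal ultrafilters), with multiplication: $A\in xy$ iff $\{n\in\mathbb{N}:A/n\in y\}\in x$, where $A/n=\{m:mn\in A\}$. For $A\subseteq\mathbb{N}$, $\overline{A}=\{x\in\beta\mathbb{N}: A\in x\}$. $P$ is the set of primes, $L_0=\{1\}$, $L_n=\{a_1\cdots a_n: a_1,\dots,a_n\in P\}$. An element $p\in\beta\mathbb{N}$ is irreducible in $\beta\mathbb{N}$ if it cannot be written as $p=xy$ with $x,y\in\beta\mathbb{N}\setminus\{1\}$. *)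

theory Defs
  imports "HOL-Computational_Algebra.Primes"
begin

text \<open>An element of beta N is an ultrafilter on N, represented as an ultrafilter
 on nat (a family of subsets of nat) that contains {n. n \<ge> 1}; equivalently
 an ultrafilter on N, the trace map A \<mapsto> A \<inter> N being a bijection.\<close>

definition Npos :: "nat set" where
  "Npos = {n. 1 \<le> n}"

definition is_ultrafilter :: "nat set set \<Rightarrow> bool" where
  "is_ultrafilter U \<longleftrightarrow>
     {} \<notin> U \<and> UNIV \<in> U \<and>
     (\<forall>A B. A \<in> U \<and> A \<subseteq> B \<longrightarrow> B \<in> U) \<and>
     (\<forall>A B. A \<in> U \<and> B \<in> U \<longrightarrow> A \<inter> B \<in> U) \<and>
     (\<forall>A. A \<in> U \<or> - A \<in> U)"

definition betaN :: "nat set set set" where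
  "betaN = {U. is_ultrafilter U \<and> Npos \<in> U}"

definition principal :: "nat \<Rightarrow> nat set set" where
  "principal n = {A. n \<in> A}"

definition sdiv :: "nat set \<Rightarrow> nat \<Rightarrow> nat set" where
  "sdiv A n = {m. m * n \<in> A}"

definition umult :: "nat set set \<Rightarrow> nat set set \<Rightarrow> nat set set" where
  "umult x y = {A. {n \<in> Npos. sdiv A n \<in> y} \<in> x}"

definition irreducible_bN :: "nat set set \<Rightarrow> bool" where
  "irreducible_bN p \<longleftrightarrow> p \<in> betaN \<and>
     \<not> (\<exists>x\<in>betaN. \<exists>y\<in>betaN. x \<noteq> principal 1 \<and> y \<noteq> principal 1 \<and> p = umult x y)"

fun uprod :: "nat set set list \<Rightarrow> nat set set" where
  "uprod [] = principal 1"
| "uprod (p # ps) = umult p (uprod ps)"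

definition Lset :: "nat \<Rightarrow> nat set" where
  "Lset k = {prod_list as | as. length as = k \<and> (\<forall>a\<in>set as. prime a)}"

end

theory Submission
  imports Defs
begin

text \<open>Let \<open>\<Omega>(n)\<close> be the number of prime factors of \<open>n\<close> counted with multiplicity,
  so that \<open>L\<^sub>i = \<Omega>\<^sup>-\<^sup>1(i)\<close>. Since \<open>\<Omega>\<close> is additive, \<open>L\<^sub>i \<in> yz\<close> forces
  \<open>L\<^sub>j \<in> y\<close> and \<open>L\<^sub>i\<^sub>-\<^sub>j \<in> z\<close> for some \<open>j \<le> i\<close>, and a factor containing \<open>L\<^sub>0 = {1}\<close>
  is the identity. Hence every nontrivial factorisation of \<open>x \<ni> L\<^sub>i\<close> splits the
  index \<open>i\<close> into two positive parts, and induction on \<open>i\<close> factors \<open>x\<close> into at most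
  \<open>i\<close> irreducibles.\<close>

lemma ultrafilter_empty_notin: "is_ultrafilter U \<Longrightarrow> {} \<notin> U"
  by (simp add: is_ultrafilter_def)

lemma ultrafilter_mono: "is_ultrafilter U \<Longrightarrow> A \<in> U \<Longrightarrow> A \<subseteq> B \<Longrightarrow> B \<in> U"
  unfolding is_ultrafilter_def by blast

lemma ultrafilter_Int: "is_ultrafilter U \<Longrightarrow> A \<in> U \<Longrightarrow> B \<in> U \<Longrightarrow> A \<inter> B \<in> U"
  unfolding is_ultrafilter_def by blast

lemma ultrafilter_Un:
  assumes U: "is_ultrafilter U" and AB: "A \<union> B \<in> U"
  shows "A \<in> U \<or> B \<in> U"
proof (rule disjCI)
  assume "B \<notin> U"
  then have "- B \<in> U" using U unfolding is_ultrafilter_def by blast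
  with U have "- B \<inter> (A \<union> B) \<in> U" using AB by (rule ultrafilter_Int)
  moreover have "- B \<inter> (A \<union> B) \<subseteq> A" by blast
  ultimately show "A \<in> U" by (rule ultrafilter_mono[OF U])
qed

lemma ultrafilter_UN_finite:
  assumes U: "is_ultrafilter U" and "finite I" and "(\<Union>j\<in>I. B j) \<in> U"
  shows "\<exists>j\<in>I. B j \<in> U"
  using \<open>finite I\<close> \<open>(\<Union>j\<in>I. B j) \<in> U\<close>
proof (induction I rule: finite_induct)
  case empty
  then show ?case using ultrafilter_empty_notin[OF U] by simp
next
  case (insert j I)
  then show ?case using ultrafilter_Un[OF U, of "B j"] by auto
qed

lemma ultrafilter_singleton_eq_principal:
  assumes U: "is_ultrafilter U" and n: "{n} \<in> U"
  shows "U = principal n"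
proof (intro set_eqI iffI)
  fix A assume "A \<in> U"
  then have "A \<inter> {n} \<noteq> {}"
    using ultrafilter_Int[OF U _ n] ultrafilter_empty_notin[OF U] by metis
  then show "A \<in> principal n" by (auto simp: principal_def)
next
  fix A assume "A \<in> principal n"
  then show "A \<in> U" using ultrafilter_mono[OF U n] by (simp add: principal_def)
qed

lemma umult_assoc: "umult (umult x y) z = umult x (umult y z)"
proof -
  have "sdiv {n \<in> Npos. sdiv A n \<in> z} m = {k \<in> Npos. sdiv (sdiv A m) k \<in> z}"
    if "m \<in> Npos" for A m
    using that by (auto simp: Npos_def sdiv_def mult.assoc)
  then show ?thesis by (auto simp: umult_def cong: conj_cong)
qed

lemma umult_principal_1_left: "umult (principal 1) y = y"
  by (simp add: umult_def principal_def Npos_def sdiv_def)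

lemma umult_principal_1_right:
  assumes "x \<in> betaN"
  shows "umult x (principal 1) = x"
proof -
  have U: "is_ultrafilter x" and N: "Npos \<in> x" using assms by (auto simp: betaN_def)
  have "{n \<in> Npos. sdiv A n \<in> principal 1} = A \<inter> Npos" for A
    by (auto simp: principal_def sdiv_def)
  moreover have "A \<inter> Npos \<in> x \<longleftrightarrow> A \<in> x" for A
    using ultrafilter_mono[OF U, of "A \<inter> Npos" A] ultrafilter_Int[OF U _ N, of A] by blast
  ultimately show ?thesis by (simp add: umult_def)
qed

lemma uprod_append: "uprod (ps @ qs) = umult (uprod ps) (uprod qs)"
  by (induction ps) (simp_all only: uprod.simps append.simps umult_principal_1_left umult_assoc)

lemma uprod_singleton: "x \<in> betaN \<Longrightarrow> uprod [x] = x"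
  by (simp only: uprod.simps umult_principal_1_right)

definition bigomega :: "nat \<Rightarrow> nat" where
  "bigomega n = size (prime_factorization n)"

lemma bigomega_mult: "m > 0 \<Longrightarrow> n > 0 \<Longrightarrow> bigomega (m * n) = bigomega m + bigomega n"
  by (simp add: bigomega_def prime_factorization_mult)

lemma Lset_eq: "Lset k = {n. n > 0 \<and> bigomega n = k}"
proof (intro set_eqI iffI)
  fix n assume "n \<in> Lset k"
  then obtain as where as: "n = prod_list as" "length as = k" "\<forall>a\<in>set as. prime a"
    unfolding Lset_def by blast
  then have "prime_factorization (prod_mset (mset as)) = mset as"
    by (intro prime_factorization_prod_mset_primes) auto
  moreover have "n > 0" using as by (auto simp: prod_list_zero_iff Nat.neq0_conv[symmetric])
  ultimately show "n \<in> {n. n > 0 \<and> bigomega n = k}"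
    using as by (simp add: bigomega_def prod_mset_prod_list)
next
  fix n assume "n \<in> {n. n > 0 \<and> bigomega n = k}"
  then have n: "n > 0" "size (prime_factorization n) = k" by (auto simp: bigomega_def)
  obtain as where as: "mset as = prime_factorization n" using ex_mset by blast
  have "prod_list as = n"
    using as n by (metis prod_mset_prod_list prod_mset_prime_factorization_nat neq0_conv)
  moreover have "length as = k" using as n by (metis size_mset)
  moreover have "\<forall>a\<in>set as. prime a"
    using as by (metis in_prime_factors_imp_prime set_mset_mset)
  ultimately show "n \<in> Lset k" unfolding Lset_def by blast
qed

lemma Lset_0: "Lset 0 = {1}"
  unfolding Lset_def by auto

lemma sdiv_Lset:
  "n > 0 \<Longrightarrow> sdiv (Lset i) n = (if bigomega n \<le> i then Lset (i - bigomega n) else {})"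
  by (auto simp: sdiv_def Lset_eq bigomega_mult)

lemma betaN_Lset_0_eq: "y \<in> betaN \<Longrightarrow> Lset 0 \<in> y \<Longrightarrow> y = principal 1"
  by (simp add: betaN_def Lset_0 ultrafilter_singleton_eq_principal)

lemma Lset_umult_split:
  assumes y: "y \<in> betaN" and z: "z \<in> betaN" and L: "Lset i \<in> umult y z"
  shows "\<exists>j\<le>i. Lset j \<in> y \<and> Lset (i - j) \<in> z"
proof -
  have Uy: "is_ultrafilter y" and Uz: "is_ultrafilter z" using y z by (auto simp: betaN_def)
  define J where "J = {j. j \<le> i \<and> Lset (i - j) \<in> z}"
  have "{n \<in> Npos. sdiv (Lset i) n \<in> z} \<subseteq> (\<Union>j\<in>J. Lset j)"
  proof
    fix n assume "n \<in> {n \<in> Npos. sdiv (Lset i) n \<in> z}"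
    then have n: "n > 0" "sdiv (Lset i) n \<in> z" by (auto simp: Npos_def)
    then have "bigomega n \<le> i"
      using sdiv_Lset[of n i] ultrafilter_empty_notin[OF Uz] by (auto split: if_splits)
    then show "n \<in> (\<Union>j\<in>J. Lset j)"
      using n sdiv_Lset[of n i] by (auto simp: J_def Lset_eq)
  qed
  moreover have "{n \<in> Npos. sdiv (Lset i) n \<in> z} \<in> y" using L by (simp add: umult_def)
  ultimately have "(\<Union>j\<in>J. Lset j) \<in> y" using ultrafilter_mono[OF Uy] by blast
  then show ?thesis using ultrafilter_UN_finite[OF Uy, of J] by (auto simp: J_def)
qed

lemma betaN_Lset_irreducible_factorization:
  assumes "x \<in> betaN" and "i \<ge> 1" and "Lset i \<in> x"
  shows "\<exists>ps. ps \<noteq> [] \<and> (\<forall>p\<in>set ps. irreducible_bN p) \<and> x = uprod ps"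
  using assms
proof (induction i arbitrary: x rule: less_induct)
  case (less i)
  show ?case
  proof (cases "irreducible_bN x")
    case True
    with uprod_singleton[OF less.prems(1)] show ?thesis by (intro exI[of _ "[x]"]) auto
  next
    case False
    then obtain y z where yz: "y \<in> betaN" "z \<in> betaN" "y \<noteq> principal 1" "z \<noteq> principal 1"
      and x: "x = umult y z" using less.prems by (auto simp: irreducible_bN_def)
    then obtain j where j: "j \<le> i" "Lset j \<in> y" "Lset (i - j) \<in> z"
      using Lset_umult_split less.prems by blast
    have "j \<noteq> 0" "i - j \<noteq> 0" using j yz betaN_Lset_0_eq by fastforce+
    then have "j < i" "i - j < i" "j \<ge> 1" "i - j \<ge> 1" by auto
    then obtain ps qs where
      "ps \<noteq> []" "\<forall>p\<in>set ps. irreducible_bN p" "y = uprod ps"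
      "qs \<noteq> []" "\<forall>p\<in>set qs. irreducible_bN p" "z = uprod qs"
      using less.IH[of j y] less.IH[of "i - j" z] j yz by blast
    then show ?thesis using x by (intro exI[of _ "ps @ qs"]) (auto simp: uprod_append)
  qed
qed

theorem theorem2p10:
  fixes x :: "nat set set" and i :: nat
  assumes "x \<in> betaN" and "i \<ge> 1" and "Lset i \<in> x"
  shows "irreducible_bN x \<or>
         (\<exists>ps. ps \<noteq> [] \<and> (\<forall>p\<in>set ps. irreducible_bN p) \<and> x = uprod ps)"
  using betaN_Lset_irreducible_factorization[OF assms] by blast

end
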